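(* Let $\mathcal{G}$ be the real Lie algebra with basis $X_1,X_2,X_3$ and brackets $[X_1,X_2]=X_3$, $[X_2,X_3]=X_1$, $[X_3,X_1]=X_2$ (Bianchi type $IX$). Every real Manin triple $(\mathcal{D},\mathcal{G}',\tilde{\mathcal{G}}')$ with $\mathcal{G}'\cong\mathcal{G}$ is isomorphic to exactly one Manin triple $(\mathcal{D},\mathcal{G},\tilde{\mathcal{G}})$ in which $\tilde{\mathcal{G}}$, written in the basis $\tilde X^1,\tilde X^2,\tilde X^3$ dual to $X_1,X_2,X_3$, has one of the following bracket structures: (a) (Bianchi $I$) $[\tilde X^1,\tilde X^2]=[\tilde X^2,\tilde X^3]=[\tilde X^3,\tilde X^1]=0$; (b) (Bianchi $V$) $[\tilde X^1,\tilde X^2]=-b\tilde X^2$, $[\tilde X^2,\tilde X^3]=0$, $[\tilde X^3,\tilde X^1]=b\tilde X^3$, for some $b>0$ (different $b$ giving non-isomorphic triples).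
   Context: A real Manin triple $(\mathcal{D},\mathcal{G},\tilde{\mathcal{G}})$ consists of a real Lie algebra $\mathcal{D}$ with a symmetric, ad-invariant, nondegenerate bilinear form $\langle\cdot,\cdot\rangle$, and two maximally isotropic Lie subalgebras $\mathcal{G},\tilde{\mathcal{G}}$ with $\mathcal{D}=\mathcal{G}\oplus\tilde{\mathcal{G}}$ as vector spaces; here $\dim\mathcal{D}=6$, $\dim\mathcal{G}=\dim\tilde{\mathcal{G}}=3$. Bases $X_i$ of $\mathcal{G}$ and $\tilde X^i$ of $\tilde{\mathcal{G}}$ are dual if $\langle X_i,X_j\rangle=0$, $\langle X_i,\tilde X^j\rangle=\delta_i^j$, $\langle\tilde X^i,\tilde X^j\rangle=0$. If $[X_i,X_j]=f_{ij}{}^kX_k$ and $[\tilde X^i,\tilde X^j]=\tilde f^{ij}{}_k\tilde X^k$, ad-invariance forces $[X_i,\tilde X^j]=f_{ki}{}^j\tilde X^k+\tilde f^{jk}{}_iX_k$, so the triple is determined by the brackets of $\mathcal{G}$ and $\tilde{\mathcal{G}}$ in dual bases (subject to the Jacobi identity of $\mathcal{D}$). Two Manin triples are isomorphic if there is a Lie algebra isomorphism of the doubles preserving the bilinear forms and mapping first subalgebra to first subalgebra and second to second; equivalently, they are related by a change of basis $X_i'=X_kA^k{}_i$, $\tilde X'^j=(A^{-1})^j{}_k\tilde X^k$. *)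

theory Defs
  imports "HOL-Analysis.Analysis"
begin

text \<open>Structure constants are indexed by the three-element type 3 (numerals 1, 2, 3 of
 this type are the three indices X_1, X_2, X_3). A triple of structure constants
 sc i j k stands for c_ij^k (bracket of basis elements i and j has k-th component
 c_ij^k).  For the dual algebra, ft i j k stands for ft^{ij}_k.\<close>

type_synonym sconst = "3 \<Rightarrow> 3 \<Rightarrow> 3 \<Rightarrow> real"

definition bianchiIX :: sconst where
  "bianchiIX i j k =
     (if (i, j, k) \<in> {(1,2,3), (2,3,1), (3,1,2)} then 1
      else if (i, j, k) \<in> {(2,1,3), (3,2,1), (1,3,2)} then -1 else 0)"

definition bianchiI :: sconst where
  "bianchiI i j k = 0"

definition bianchiV :: "real \<Rightarrow> sconst" where
  "bianchiV b i j k =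
     (if (i, j, k) = (1,2,2) then -b
      else if (i, j, k) = (2,1,2) then b
      else if (i, j, k) = (3,1,3) then b
      else if (i, j, k) = (1,3,3) then -b else 0)"

definition gbr :: "sconst \<Rightarrow> real^3 \<Rightarrow> real^3 \<Rightarrow> real^3" where
  "gbr f x y = (\<chi> k. \<Sum>i\<in>UNIV. \<Sum>j\<in>UNIV. x$i * y$j * f i j k)"

definition lie_isomorphic :: "sconst \<Rightarrow> sconst \<Rightarrow> bool" where
  "lie_isomorphic f g \<longleftrightarrow>
     (\<exists>\<phi> :: real^3 \<Rightarrow> real^3. linear \<phi> \<and> bij \<phi> \<and>
        (\<forall>x y. \<phi> (gbr f x y) = gbr g (\<phi> x) (\<phi> y)))"

text \<open>The double D = G + G~, an element (x, xi) standing for x_i X_i + xi_j X~^j.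
 Brackets: [X_i,X_j] = f_ij^k X_k, [X~^i,X~^j] = ft^ij_k X~^k,
 [X_i,X~^j] = f_ki^j X~^k + ft^jk_i X_k, extended bilinearly and antisymmetrically.\<close>
definition dbr :: "sconst \<Rightarrow> sconst \<Rightarrow> ((real^3) \<times> (real^3)) \<Rightarrow> ((real^3) \<times> (real^3)) \<Rightarrow> ((real^3) \<times> (real^3))" where
  "dbr f ft u v =
     (let x = fst u; \<xi> = snd u; y = fst v; \<eta> = snd v in
       ((\<chi> k. \<Sum>i\<in>UNIV. \<Sum>j\<in>UNIV.
            x$i * y$j * f i j k + x$i * \<eta>$j * ft j k i - \<xi>$j * y$i * ft j k i),
        (\<chi> k. \<Sum>i\<in>UNIV. \<Sum>j\<in>UNIV.
            \<xi>$i * \<eta>$j * ft i j k + x$i * \<eta>$j * f k i j - \<xi>$j * y$i * f k i j)))"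

definition dform :: "((real^3) \<times> (real^3)) \<Rightarrow> ((real^3) \<times> (real^3)) \<Rightarrow> real" where
  "dform u v = fst u \<bullet> snd v + snd u \<bullet> fst v"

text \<open>Symmetry, nondegeneracy,
 isotropy of G and G~ and the direct sum decomposition hold by construction.\<close>
definition manin_triple :: "sconst \<Rightarrow> sconst \<Rightarrow> bool" where
  "manin_triple f ft \<longleftrightarrow>
     (\<forall>u. dbr f ft u u = 0) \<and>
     (\<forall>u v w. dbr f ft u (dbr f ft v w) + dbr f ft v (dbr f ft w u)
              + dbr f ft w (dbr f ft u v) = 0) \<and>
     (\<forall>u v w. dform (dbr f ft u v) w = dform u (dbr f ft v w))"

definition Gsub :: "((real^3) \<times> (real^3)) set" where
  "Gsub = range (\<lambda>x. (x, 0))"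

definition Gtsub :: "((real^3) \<times> (real^3)) set" where
  "Gtsub = range (\<lambda>\<xi>. (0, \<xi>))"

definition manin_iso :: "sconst \<Rightarrow> sconst \<Rightarrow> sconst \<Rightarrow> sconst \<Rightarrow> bool" where
  "manin_iso f1 ft1 f2 ft2 \<longleftrightarrow>
     (\<exists>\<Phi> :: ((real^3) \<times> (real^3)) \<Rightarrow> ((real^3) \<times> (real^3)).
        linear \<Phi> \<and> bij \<Phi> \<and>
        (\<forall>u v. \<Phi> (dbr f1 ft1 u v) = dbr f2 ft2 (\<Phi> u) (\<Phi> v)) \<and>
        (\<forall>u v. dform (\<Phi> u) (\<Phi> v) = dform u v) \<and>
        \<Phi> ` Gsub = Gsub \<and> \<Phi> ` Gtsub = Gtsub)"

end

(*
  An isomorphism of Manin triples amounts to a pair (phi, psi) of Lie algebra isomorphisms of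
  the two halves with psi = (phi^-1)^T, so we may take the first algebra to be (R^3, cross product).
  The Jacobi identities of the double that mix X_a, X_b and X~^c are linear in the dual structure
  constants and force the dual bracket to be [xi, eta] = (v . xi) eta - (v . eta) xi for a vector v.
  Rotations preserve the cross product and rotate v, so v can be moved to (-|v|, 0, 0): this is
  Bianchi V with b = |v|, or Bianchi I when v = 0.  Conversely, an isomorphism between two such
  triples maps v to phi v, and an automorphism phi of the cross product preserves norms because
  a x (a x y) = (a . y) a - |a|^2 y; hence |v| is an invariant.
*)

theory Submission
  imports Defs
begin

unbundle cross3_syntax

section \<open>Three-dimensional brackets\<close>

definition bianchiV_vec :: "real^3 \<Rightarrow> sconst" where
  "bianchiV_vec v i j k = v$i * (if j = k then 1 else 0) - v$j * (if i = k then 1 else 0)"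

lemma gbr_bianchiIX: "gbr bianchiIX x y = x \<times> y"
  by (simp add: gbr_def bianchiIX_def cross3_def vec_eq_iff sum_3 forall_3 vector_def)

lemma gbr_bianchiV_vec: "gbr (bianchiV_vec v) x y = (v \<bullet> x) *\<^sub>R y - (v \<bullet> y) *\<^sub>R x"
  by (simp add: gbr_def bianchiV_vec_def vec_eq_iff sum_3 forall_3 inner_vec_def algebra_simps)

lemma bilinear_gbr: "bilinear (gbr f)"
  by (simp add: bilinear_def linear_iff gbr_def vec_eq_iff sum_3 algebra_simps)

lemma gbr_axis: "gbr f (axis i 1) (axis j 1) $ k = f i j k"
  using exhaust_3[of i] exhaust_3[of j] by (auto simp: gbr_def axis_def sum_3)

lemma gbr_structure_constants:
  assumes "bilinear B"
  shows "gbr (\<lambda>i j k. B (axis i 1) (axis j 1) $ k) = B"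
proof (rule bilinear_eq_stdbasis[OF bilinear_gbr assms])
  fix u v :: "real^3" assume "u \<in> Basis" "v \<in> Basis"
  then show "gbr (\<lambda>i j k. B (axis i 1) (axis j 1) $ k) u v = B u v"
    by (auto simp: Basis_vec_def) (simp add: vec_eq_iff gbr_axis)
qed

lemma bianchiV_eq_bianchiV_vec: "bianchiV c = bianchiV_vec (vector [- c, 0, 0])"
proof (intro ext)
  fix i j k :: 3
  show "bianchiV c i j k = bianchiV_vec (vector [- c, 0, 0]) i j k"
    using exhaust_3[of i] exhaust_3[of j] exhaust_3[of k]
    by (elim disjE) (simp_all add: bianchiV_vec_def bianchiV_def)
qed

lemma bianchiV_0: "bianchiV 0 = bianchiI"
  by (intro ext) (simp add: bianchiV_def bianchiI_def)

lemma bianchiI_or_bianchiV_pos_iff: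
  "(ft0 = bianchiI \<or> (\<exists>b>0. ft0 = bianchiV b)) \<longleftrightarrow> (\<exists>c\<ge>0. ft0 = bianchiV c)"
  using bianchiV_0 by (metis less_eq_real_def)

lemma linear_inj_not_into_line:
  fixes \<phi> :: "'a::euclidean_space \<Rightarrow> 'b::euclidean_space"
  assumes "linear \<phi>" "inj \<phi>" "DIM('a) \<ge> 2"
  shows "\<exists>y. \<phi> y \<notin> span {w}"
proof -
  have "dim (range \<phi>) = DIM('a)"
    using dim_image_eq[OF assms(1)] assms(2) by (simp add: inj_on_def)
  moreover have "dim (span {w}) \<le> 1"
    using dim_le_card[of "span {w}" "{w}"] by simp
  ultimately have "\<not> range \<phi> \<subseteq> span {w}"
    using dim_subset[of "range \<phi>" "span {w}"] assms(3) by linarith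
  then show ?thesis by blast
qed

lemma scaleR_eq_imp_in_span:
  assumes "c \<noteq> 0" "c *\<^sub>R x = d *\<^sub>R y"
  shows "x \<in> span {y}"
proof -
  have "x = inverse c *\<^sub>R (c *\<^sub>R x)"
    using assms(1) by simp
  also have "\<dots> = (inverse c * d) *\<^sub>R y"
    using assms(2) by simp
  finally show ?thesis
    by (simp add: span_base span_scale)
qed

lemma norm_vector_x00: "norm (vector [c, 0, 0] :: real^3) = \<bar>c\<bar>"
  by (simp add: norm_eq_sqrt_inner inner_vec_def sum_3)

lemma cross_cross_self: "x \<times> (x \<times> y) = (x \<bullet> y) *\<^sub>R x - (x \<bullet> x) *\<^sub>R y"
  unfolding vec_eq_iff forall_3 by (simp add: cross3_def inner_vec_def sum_3 vector_def algebra_simps)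

lemma gbr_bianchiV_vec_orthogonal_transformation:
  assumes "orthogonal_transformation R"
  shows "R (gbr (bianchiV_vec v) x y) = gbr (bianchiV_vec (R v)) (R x) (R y)"
proof -
  interpret linear R using assms by (simp add: orthogonal_transformation)
  show ?thesis
    using assms by (simp add: gbr_bianchiV_vec orthogonal_transformation_def diff scale)
qed

lemma norm_cross3_automorphism:
  assumes "linear \<phi>" "inj \<phi>" and hom: "\<And>x y. \<phi> (x \<times> y) = \<phi> x \<times> \<phi> y"
  shows "norm (\<phi> a) = norm a"
proof -
  interpret linear \<phi> by fact
  have rel: "(a \<bullet> a - \<phi> a \<bullet> \<phi> a) *\<^sub>R \<phi> y = (a \<bullet> y - \<phi> a \<bullet> \<phi> y) *\<^sub>R \<phi> a" for y
  proof -
    have "\<phi> (a \<times> (a \<times> y)) = \<phi> a \<times> (\<phi> a \<times> \<phi> y)"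
      by (simp add: hom)
    then show ?thesis
      by (simp add: cross_cross_self diff scale algebra_simps)
  qed
  have "a \<bullet> a = \<phi> a \<bullet> \<phi> a"
  proof (rule ccontr)
    assume "a \<bullet> a \<noteq> \<phi> a \<bullet> \<phi> a"
    then have "\<phi> y \<in> span {\<phi> a}" for y
      by (intro scaleR_eq_imp_in_span[OF _ rel]) simp
    then show False
      using linear_inj_not_into_line[OF assms(1,2), of "\<phi> a"] by auto
  qed
  then show ?thesis
    by (simp add: norm_eq_sqrt_inner)
qed

section \<open>Isomorphisms of Manin triples\<close>

lemma dform_dbr:
  "dform (dbr f ft (x, \<xi>) (y, \<eta>)) (z, \<zeta>) =
     gbr f x y \<bullet> \<zeta> + x \<bullet> gbr ft \<eta> \<zeta> - y \<bullet> gbr ft \<xi> \<zeta> + gbr ft \<xi> \<eta> \<bullet> z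
     + \<eta> \<bullet> gbr f z x - \<xi> \<bullet> gbr f z y"
  by (simp add: dform_def dbr_def gbr_def inner_vec_def sum_3 algebra_simps)

lemma dform_nondegenerate:
  assumes "\<And>w. dform u w = dform u' w"
  shows "u = u'"
proof -
  have "\<forall>z. fst u \<bullet> z = fst u' \<bullet> z" "\<forall>z. snd u \<bullet> z = snd u' \<bullet> z"
    using assms[of "(0, _)"] assms[of "(_, 0)"] by (simp_all add: dform_def)
  then show ?thesis
    by (simp add: prod_eq_iff vector_eq_rdot)
qed

lemma dbr_Gsub: "dbr f ft (x, 0) (y, 0) = (gbr f x y, 0)"
  by (simp add: dbr_def gbr_def vec_eq_iff)

lemma dbr_Gtsub: "dbr f ft (0, \<xi>) (0, \<eta>) = (0, gbr ft \<xi> \<eta>)"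
  by (simp add: dbr_def gbr_def vec_eq_iff)

text \<open>For the change of basis \<open>X'\<^sub>i = X\<^sub>k A\<^sup>k\<^sub>i\<close>, \<open>X~'\<^sup>j = (A\<^sup>-\<^sup>1)\<^sup>j\<^sub>k X~\<^sup>k\<close>
  the pair is \<open>\<phi> = A\<close>, \<open>\<psi> = (A\<^sup>-\<^sup>1)\<^sup>T\<close>.\<close>

definition dual_pair :: "(real^3 \<Rightarrow> real^3) \<Rightarrow> (real^3 \<Rightarrow> real^3) \<Rightarrow> bool" where
  "dual_pair \<phi> \<psi> \<longleftrightarrow> linear \<phi> \<and> linear \<psi> \<and> bij \<phi> \<and> bij \<psi> \<and> (\<forall>x \<xi>. \<phi> x \<bullet> \<psi> \<xi> = x \<bullet> \<xi>)"

lemma dual_pair_adjoint_inv: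
  assumes "linear \<phi>" "bij \<phi>"
  shows "dual_pair \<phi> (adjoint (inv \<phi>))"
proof -
  have lin_inv: "linear (inv \<phi>)"
    using assms by (simp add: bij_is_inj inj_linear_imp_inv_linear)
  then have lin: "linear (adjoint (inv \<phi>))"
    by (rule adjoint_linear)
  have pair: "\<phi> x \<bullet> adjoint (inv \<phi>) \<xi> = x \<bullet> \<xi>" for x \<xi>
    using adjoint_works[OF lin_inv, of "\<phi> x" \<xi>] assms(2) by (simp add: bij_is_inj)
  have "inj (adjoint (inv \<phi>))"
  proof (rule injI)
    fix \<xi> \<eta> assume "adjoint (inv \<phi>) \<xi> = adjoint (inv \<phi>) \<eta>"
    then have "x \<bullet> \<xi> = x \<bullet> \<eta>" for x
      by (metis pair)
    then show "\<xi> = \<eta>"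
      using vector_eq_ldot by blast
  qed
  then show ?thesis
    using assms lin pair by (simp add: dual_pair_def bij_def linear_inj_imp_surj)
qed

lemma dual_pair_orthogonal_transformation:
  assumes "orthogonal_transformation R"
  shows "dual_pair R R"
  using assms orthogonal_transformation_bij[OF assms]
  by (simp add: dual_pair_def orthogonal_transformation_def)

lemma dual_pair_imp_manin_iso:
  assumes dual: "dual_pair \<phi> \<psi>"
    and hom: "\<And>x y. \<phi> (gbr f x y) = gbr g (\<phi> x) (\<phi> y)"
    and hom_dual: "\<And>\<xi> \<eta>. \<psi> (gbr ft \<xi> \<eta>) = gbr gt (\<psi> \<xi>) (\<psi> \<eta>)"
  shows "manin_iso f ft g gt"
proof -
  let ?\<Phi> = "map_prod \<phi> \<psi>"
  interpret \<phi>: linear \<phi> using dual by (simp add: dual_pair_def)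
  interpret \<psi>: linear \<psi> using dual by (simp add: dual_pair_def)
  have pair: "\<phi> x \<bullet> \<psi> \<xi> = x \<bullet> \<xi>" for x \<xi>
    using dual by (simp add: dual_pair_def)
  have "linear ?\<Phi>"
    by (simp add: linear_iff \<phi>.add \<psi>.add \<phi>.scale \<psi>.scale)
  moreover have "bij ?\<Phi>"
    using dual by (simp add: dual_pair_def bij_def prod.inj_map map_prod_surj)
  moreover have form: "dform (?\<Phi> u) (?\<Phi> v) = dform u v" for u v
    by (simp add: dform_def map_prod_def split_def pair inner_commute)
  moreover have "?\<Phi> (dbr f ft u v) = dbr g gt (?\<Phi> u) (?\<Phi> v)" for u v
    \<comment> \<open>a bracket of the double is determined by its pairings, which only involve the
      brackets of the two halves (\<open>dform_dbr\<close>)\<close>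
  proof (rule dform_nondegenerate)
    fix w
    from \<open>bij ?\<Phi>\<close> obtain z \<zeta> where w: "w = ?\<Phi> (z, \<zeta>)"
      by (metis bij_pointE surj_pair)
    obtain x \<xi> y \<eta> where uv: "u = (x, \<xi>)" "v = (y, \<eta>)"
      by fastforce
    have "dform (?\<Phi> (dbr f ft u v)) w = dform (dbr f ft (x, \<xi>) (y, \<eta>)) (z, \<zeta>)"
      by (simp only: w uv form)
    also have "\<dots> = dform (dbr g gt (?\<Phi> u) (?\<Phi> v)) w"
      by (simp add: w uv dform_dbr pair inner_commute[of "\<psi> _"] flip: hom hom_dual)
         (simp add: inner_commute)
    finally show "dform (?\<Phi> (dbr f ft u v)) w = dform (dbr g gt (?\<Phi> u) (?\<Phi> v)) w" .
  qed
  moreover have "?\<Phi> ` Gsub = Gsub"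
  proof -
    have "?\<Phi> ` Gsub = (\<lambda>x. (x, 0)) ` range \<phi>"
      by (simp add: Gsub_def image_image \<psi>.zero)
    then show ?thesis
      using dual by (simp add: Gsub_def dual_pair_def bij_is_surj)
  qed
  moreover have "?\<Phi> ` Gtsub = Gtsub"
  proof -
    have "?\<Phi> ` Gtsub = (\<lambda>\<xi>. (0, \<xi>)) ` range \<psi>"
      by (simp add: Gtsub_def image_image \<phi>.zero)
    then show ?thesis
      using dual by (simp add: Gtsub_def dual_pair_def bij_is_surj)
  qed
  ultimately show ?thesis
    unfolding manin_iso_def by blast
qed

lemma manin_iso_imp_dual_pair:
  assumes "manin_iso f ft g gt"
  obtains \<phi> \<psi> where "dual_pair \<phi> \<psi>"
    and "\<And>x y. \<phi> (gbr f x y) = gbr g (\<phi> x) (\<phi> y)"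
    and "\<And>\<xi> \<eta>. \<psi> (gbr ft \<xi> \<eta>) = gbr gt (\<psi> \<xi>) (\<psi> \<eta>)"
proof -
  obtain \<Phi> where "linear \<Phi>" and "bij \<Phi>"
    and hom: "\<And>u v. \<Phi> (dbr f ft u v) = dbr g gt (\<Phi> u) (\<Phi> v)"
    and form: "\<And>u v. dform (\<Phi> u) (\<Phi> v) = dform u v"
    and G: "\<Phi> ` Gsub = Gsub" and Gt: "\<Phi> ` Gtsub = Gtsub"
    using assms unfolding manin_iso_def by blast
  interpret \<Phi>: linear \<Phi> by fact
  define \<phi> where "\<phi> x = fst (\<Phi> (x, 0))" for x
  define \<psi> where "\<psi> \<xi> = snd (\<Phi> (0, \<xi>))" for \<xi>
  have \<Phi>_G: "\<Phi> (x, 0) = (\<phi> x, 0)" for x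
  proof -
    have "\<Phi> (x, 0) \<in> Gsub"
      using G by (auto simp: Gsub_def)
    then show ?thesis
      by (auto simp: \<phi>_def Gsub_def)
  qed
  have \<Phi>_Gt: "\<Phi> (0, \<xi>) = (0, \<psi> \<xi>)" for \<xi>
  proof -
    have "\<Phi> (0, \<xi>) \<in> Gtsub"
      using Gt by (auto simp: Gtsub_def)
    then show ?thesis
      by (auto simp: \<psi>_def Gtsub_def)
  qed
  have "linear \<phi>"
    unfolding linear_iff \<phi>_def using \<Phi>.add[of "(_, 0)" "(_, 0)"] \<Phi>.scale[of _ "(_, 0)"] by simp
  moreover have "linear \<psi>"
    unfolding linear_iff \<psi>_def using \<Phi>.add[of "(0, _)" "(0, _)"] \<Phi>.scale[of _ "(0, _)"] by simp
  moreover have "inj \<phi>"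
  proof (rule injI)
    fix x y assume "\<phi> x = \<phi> y"
    then have "\<Phi> (x, 0) = \<Phi> (y, 0)" by (simp add: \<Phi>_G)
    then show "x = y" using bij_is_inj[OF \<open>bij \<Phi>\<close>] by (simp add: inj_eq)
  qed
  moreover have "inj \<psi>"
  proof (rule injI)
    fix \<xi> \<eta> assume "\<psi> \<xi> = \<psi> \<eta>"
    then have "\<Phi> (0, \<xi>) = \<Phi> (0, \<eta>)" by (simp add: \<Phi>_Gt)
    then show "\<xi> = \<eta>" using bij_is_inj[OF \<open>bij \<Phi>\<close>] by (simp add: inj_eq)
  qed
  moreover have "\<phi> x \<bullet> \<psi> \<xi> = x \<bullet> \<xi>" for x \<xi>
    using form[of "(x, 0)" "(0, \<xi>)"] by (simp add: \<Phi>_G \<Phi>_Gt dform_def)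
  ultimately have "dual_pair \<phi> \<psi>"
    by (simp add: dual_pair_def bij_def linear_inj_imp_surj)
  moreover have "\<phi> (gbr f x y) = gbr g (\<phi> x) (\<phi> y)" for x y
    using hom[of "(x, 0)" "(y, 0)"] by (simp add: \<Phi>_G dbr_Gsub)
  moreover have "\<psi> (gbr ft \<xi> \<eta>) = gbr gt (\<psi> \<xi>) (\<psi> \<eta>)" for \<xi> \<eta>
    using hom[of "(0, \<xi>)" "(0, \<eta>)"] by (simp add: \<Phi>_Gt dbr_Gtsub)
  ultimately show ?thesis
    using that by blast
qed

lemma manin_iso_sym:
  assumes "manin_iso f ft g gt"
  shows "manin_iso g gt f ft"
proof -
  obtain \<Phi> where "linear \<Phi>" and "bij \<Phi>"
    and hom: "\<And>u v. \<Phi> (dbr f ft u v) = dbr g gt (\<Phi> u) (\<Phi> v)"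
    and form: "\<And>u v. dform (\<Phi> u) (\<Phi> v) = dform u v"
    and "\<Phi> ` Gsub = Gsub" "\<Phi> ` Gtsub = Gtsub"
    using assms unfolding manin_iso_def by blast
  have inv_\<Phi>: "inv \<Phi> (\<Phi> u) = u" "\<Phi> (inv \<Phi> u) = u" for u
    using \<open>bij \<Phi>\<close> by (simp_all add: bij_is_inj bij_is_surj surj_f_inv_f)
  have "linear (inv \<Phi>)"
    using \<open>linear \<Phi>\<close> \<open>bij \<Phi>\<close> by (simp add: bij_is_inj inj_linear_imp_inv_linear)
  moreover have "bij (inv \<Phi>)"
    using \<open>bij \<Phi>\<close> by (rule bij_imp_bij_inv)
  moreover have "inv \<Phi> (dbr g gt u v) = dbr f ft (inv \<Phi> u) (inv \<Phi> v)" for u v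
    by (metis hom inv_\<Phi>)
  moreover have "dform (inv \<Phi> u) (inv \<Phi> v) = dform u v" for u v
    by (metis form inv_\<Phi>(2))
  moreover have "inv \<Phi> ` Gsub = Gsub" "inv \<Phi> ` Gtsub = Gtsub"
    using \<open>bij \<Phi>\<close> \<open>\<Phi> ` Gsub = Gsub\<close> \<open>\<Phi> ` Gtsub = Gtsub\<close> by (metis bij_is_inj image_inv_f_f)+
  ultimately show ?thesis
    unfolding manin_iso_def by blast
qed

lemma manin_iso_trans:
  assumes "manin_iso f ft g gt" "manin_iso g gt h ht"
  shows "manin_iso f ft h ht"
proof -
  obtain \<Phi> where "linear \<Phi>" "bij \<Phi>"
    "\<And>u v. \<Phi> (dbr f ft u v) = dbr g gt (\<Phi> u) (\<Phi> v)"
    "\<And>u v. dform (\<Phi> u) (\<Phi> v) = dform u v"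
    "\<Phi> ` Gsub = Gsub" "\<Phi> ` Gtsub = Gtsub"
    using assms(1) unfolding manin_iso_def by blast
  moreover obtain \<Psi> where "linear \<Psi>" "bij \<Psi>"
    "\<And>u v. \<Psi> (dbr g gt u v) = dbr h ht (\<Psi> u) (\<Psi> v)"
    "\<And>u v. dform (\<Psi> u) (\<Psi> v) = dform u v"
    "\<Psi> ` Gsub = Gsub" "\<Psi> ` Gtsub = Gtsub"
    using assms(2) unfolding manin_iso_def by blast
  ultimately have "linear (\<Psi> \<circ> \<Phi>) \<and> bij (\<Psi> \<circ> \<Phi>) \<and>
      (\<forall>u v. (\<Psi> \<circ> \<Phi>) (dbr f ft u v) = dbr h ht ((\<Psi> \<circ> \<Phi>) u) ((\<Psi> \<circ> \<Phi>) v)) \<and>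
      (\<forall>u v. dform ((\<Psi> \<circ> \<Phi>) u) ((\<Psi> \<circ> \<Phi>) v) = dform u v) \<and>
      (\<Psi> \<circ> \<Phi>) ` Gsub = Gsub \<and> (\<Psi> \<circ> \<Phi>) ` Gtsub = Gtsub"
    by (simp add: linear_compose bij_comp flip: image_image)
  then show ?thesis
    unfolding manin_iso_def by blast
qed

lemma manin_triple_manin_iso:
  assumes "manin_iso f ft g gt" "manin_triple f ft"
  shows "manin_triple g gt"
proof -
  obtain \<Phi> where "linear \<Phi>" and "surj \<Phi>"
    and hom: "\<And>u v. dbr g gt (\<Phi> u) (\<Phi> v) = \<Phi> (dbr f ft u v)"
    and form: "\<And>u v. dform (\<Phi> u) (\<Phi> v) = dform u v"
    using assms(1) unfolding manin_iso_def by (metis bij_is_surj)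
  interpret \<Phi>: linear \<Phi> by fact
  have pre: "\<exists>u'. u = \<Phi> u'" for u
    using \<open>surj \<Phi>\<close> by (metis surjD)
  have f: "dbr f ft u u = 0"
    "dbr f ft u (dbr f ft v w) + dbr f ft v (dbr f ft w u) + dbr f ft w (dbr f ft u v) = 0"
    "dform (dbr f ft u v) w = dform u (dbr f ft v w)" for u v w
    using assms(2) unfolding manin_triple_def by blast+
  have "dbr g gt u u = 0" for u
    using pre[of u] f(1) by (auto simp: hom)
  moreover have "dbr g gt u (dbr g gt v w) + dbr g gt v (dbr g gt w u) + dbr g gt w (dbr g gt u v) = 0"
    for u v w
    using pre[of u] pre[of v] pre[of w] f(2) by (auto simp: hom simp flip: \<Phi>.add)
  moreover have "dform (dbr g gt u v) w = dform u (dbr g gt v w)" for u v w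
    using pre[of u] pre[of v] pre[of w] f(3) by (auto simp: hom form)
  ultimately show ?thesis
    unfolding manin_triple_def by blast
qed

lemma lie_isomorphic_imp_manin_iso:
  assumes "lie_isomorphic f g"
  shows "\<exists>gt. manin_iso f ft g gt"
proof -
  obtain \<phi> where "linear \<phi>" "bij \<phi>" and hom: "\<And>x y. \<phi> (gbr f x y) = gbr g (\<phi> x) (\<phi> y)"
    using assms unfolding lie_isomorphic_def by blast
  define \<psi> where "\<psi> = adjoint (inv \<phi>)"
  have dual: "dual_pair \<phi> \<psi>"
    unfolding \<psi>_def using \<open>linear \<phi>\<close> \<open>bij \<phi>\<close> by (rule dual_pair_adjoint_inv)
  then have "linear \<psi>" "bij \<psi>"
    by (simp_all add: dual_pair_def)
  then have "linear (inv \<psi>)"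
    by (simp add: bij_is_inj inj_linear_imp_inv_linear)
  define B where "B \<xi> \<eta> = \<psi> (gbr ft (inv \<psi> \<xi>) (inv \<psi> \<eta>))" for \<xi> \<eta>
  have "bilinear B"
    using linear_compose[OF linear_compose[OF \<open>linear (inv \<psi>)\<close>] \<open>linear \<psi>\<close>] bilinear_gbr
    unfolding bilinear_def B_def o_def by blast
  then have "\<psi> (gbr ft \<xi> \<eta>) = gbr (\<lambda>i j k. B (axis i 1) (axis j 1) $ k) (\<psi> \<xi>) (\<psi> \<eta>)" for \<xi> \<eta>
    using \<open>bij \<psi>\<close> by (simp add: gbr_structure_constants B_def[of "\<psi> \<xi>" "\<psi> \<eta>"] bij_is_inj)
  then show ?thesis
    using dual_pair_imp_manin_iso[OF dual hom] by blast
qed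

section \<open>Manin triples over Bianchi IX\<close>

lemma manin_triple_dual_alternating:
  assumes "manin_triple f g"
  shows "g i i k = 0" and "g j i k = - g i j k"
proof -
  have sq: "gbr g \<xi> \<xi> = 0" for \<xi>
    using assms dbr_Gtsub[of f g \<xi> \<xi>] by (simp add: manin_triple_def zero_prod_def)
  have diag: "g l l k = 0" for l
    using sq[of "axis l 1"] gbr_axis[of g l l k] by simp
  then show "g i i k = 0" .
  have "gbr g (axis i 1 + axis j 1) (axis i 1 + axis j 1) $ k = 0"
    using sq by simp
  then show "g j i k = - g i j k"
    by (simp add: bilinear_ladd[OF bilinear_gbr] bilinear_radd[OF bilinear_gbr] gbr_axis diag)
qed

lemma manin_triple_bianchiIX_imp_bianchiV_vec:
  assumes "manin_triple bianchiIX g"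
  shows "g = bianchiV_vec (vector [g 1 2 2, g 2 1 1, g 3 1 1])"
proof -
  have swap: "g 2 1 k = - g 1 2 k" "g 3 1 k = - g 1 3 k" "g 3 2 k = - g 2 3 k"
    and diag: "g 1 1 k = 0" "g 2 2 k = 0" "g 3 3 k = 0" for k
    using manin_triple_dual_alternating[OF assms] by blast+
  \<comment> \<open>only the mixed Jacobi identities for \<open>X\<^sub>a, X\<^sub>b, X~\<^sup>c\<close> are needed; they are linear in \<open>g\<close>\<close>
  have jacobi: "dbr bianchiIX g (axis a 1, 0) (dbr bianchiIX g (axis b 1, 0) (0, axis c 1))
     + dbr bianchiIX g (axis b 1, 0) (dbr bianchiIX g (0, axis c 1) (axis a 1, 0))
     + dbr bianchiIX g (0, axis c 1) (dbr bianchiIX g (axis a 1, 0) (axis b 1, 0)) = 0" for a b c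
    using assms unfolding manin_triple_def by blast
  have coeffs: "g 1 2 3 = 0 \<and> g 1 3 2 = 0 \<and> g 2 3 1 = 0 \<and>
        g 1 3 3 = g 1 2 2 \<and> g 2 3 3 = - g 1 2 1 \<and> g 2 3 2 = g 1 3 1"
  proof -
    note [simp] = dbr_def sum_3 axis_def bianchiIX_def vec_eq_iff forall_3 swap diag zero_prod_def
    show ?thesis
      using jacobi[of 1 2 1] jacobi[of 1 2 2] jacobi[of 1 2 3]
        jacobi[of 1 3 1] jacobi[of 1 3 2] jacobi[of 1 3 3]
        jacobi[of 2 3 1] jacobi[of 2 3 2] jacobi[of 2 3 3]
      by simp
  qed
  show ?thesis
  proof (intro ext)
    fix i j k :: 3
    show "g i j k = bianchiV_vec (vector [g 1 2 2, g 2 1 1, g 3 1 1]) i j k"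
      using exhaust_3[of i] exhaust_3[of j] exhaust_3[of k] coeffs
      by (elim disjE) (simp_all add: bianchiV_vec_def swap diag)
  qed
qed

lemma manin_iso_bianchiV_vec_rotation:
  assumes "orthogonal_transformation R" "det (matrix R) = 1"
  shows "manin_iso bianchiIX (bianchiV_vec v) bianchiIX (bianchiV_vec (R v))"
proof (rule dual_pair_imp_manin_iso[OF dual_pair_orthogonal_transformation[OF assms(1)]])
  show "R (gbr bianchiIX x y) = gbr bianchiIX (R x) (R y)" for x y
    using assms cross_linear_image[of R x y] by (simp add: gbr_bianchiIX orthogonal_transformation)
  show "R (gbr (bianchiV_vec v) \<xi> \<eta>) = gbr (bianchiV_vec (R v)) (R \<xi>) (R \<eta>)" for \<xi> \<eta>
    using assms(1) by (rule gbr_bianchiV_vec_orthogonal_transformation)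
qed

lemma manin_iso_bianchiV_vec_bianchiV:
  "manin_iso bianchiIX (bianchiV_vec v) bianchiIX (bianchiV (norm v))"
proof -
  have "norm v = norm (vector [- norm v, 0, 0] :: real^3)"
    by (simp add: norm_vector_x00)
  then obtain R where "orthogonal_transformation R" "det (matrix R) = 1"
    and "R v = vector [- norm v, 0, 0]"
    using rotation_exists[of v] by auto
  then show ?thesis
    using manin_iso_bianchiV_vec_rotation[of R v] by (simp add: bianchiV_eq_bianchiV_vec)
qed

lemma dual_pair_bianchiV_vec_hom:
  assumes dual: "dual_pair \<phi> \<psi>"
    and hom: "\<And>\<xi> \<eta>. \<psi> (gbr (bianchiV_vec a) \<xi> \<eta>) = gbr (bianchiV_vec a') (\<psi> \<xi>) (\<psi> \<eta>)"
  shows "a' = \<phi> a"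
proof -
  interpret \<psi>: linear \<psi> using dual by (simp add: dual_pair_def)
  define \<alpha> where "\<alpha> \<xi> = a \<bullet> \<xi> - a' \<bullet> \<psi> \<xi>" for \<xi>
  have rel: "\<alpha> \<xi> *\<^sub>R \<psi> \<eta> = \<alpha> \<eta> *\<^sub>R \<psi> \<xi>" for \<xi> \<eta>
    using hom[of \<xi> \<eta>] by (simp add: gbr_bianchiV_vec \<psi>.diff \<psi>.scale \<alpha>_def algebra_simps)
  have "\<alpha> \<xi> = 0" for \<xi>
  proof (rule ccontr)
    assume "\<alpha> \<xi> \<noteq> 0"
    then have "\<psi> \<eta> \<in> span {\<psi> \<xi>}" for \<eta>
      using rel by (rule scaleR_eq_imp_in_span)
    then show False
      using linear_inj_not_into_line[of \<psi> "\<psi> \<xi>"] dual by (auto simp: dual_pair_def bij_is_inj)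
  qed
  then have "(a' - \<phi> a) \<bullet> \<psi> \<xi> = 0" for \<xi>
    using dual by (simp add: \<alpha>_def inner_diff_left dual_pair_def)
  moreover have "surj \<psi>"
    using dual by (simp add: dual_pair_def bij_is_surj)
  ultimately have "(a' - \<phi> a) \<bullet> (a' - \<phi> a) = 0"
    by (metis surjD)
  then show ?thesis
    by simp
qed

lemma manin_iso_bianchiV_vec_imp_norm_eq:
  assumes "manin_iso bianchiIX (bianchiV_vec a) bianchiIX (bianchiV_vec a')"
  shows "norm a' = norm a"
proof -
  obtain \<phi> \<psi> where dual: "dual_pair \<phi> \<psi>" and hom: "\<And>x y. \<phi> (x \<times> y) = \<phi> x \<times> \<phi> y"
    and hom_dual: "\<And>\<xi> \<eta>. \<psi> (gbr (bianchiV_vec a) \<xi> \<eta>) = gbr (bianchiV_vec a') (\<psi> \<xi>) (\<psi> \<eta>)"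
    using manin_iso_imp_dual_pair[OF assms] unfolding gbr_bianchiIX by metis
  have "a' = \<phi> a"
    using dual hom_dual by (rule dual_pair_bianchiV_vec_hom)
  moreover have "norm (\<phi> a) = norm a"
    using dual hom by (intro norm_cross3_automorphism) (auto simp: dual_pair_def bij_is_inj)
  ultimately show ?thesis
    by simp
qed

lemma manin_iso_bianchiV_imp_eq:
  assumes "manin_iso bianchiIX (bianchiV c) bianchiIX (bianchiV c')" "c \<ge> 0" "c' \<ge> 0"
  shows "c = c'"
  using manin_iso_bianchiV_vec_imp_norm_eq[of "vector [- c, 0, 0]" "vector [- c', 0, 0]"] assms
  by (simp add: bianchiV_eq_bianchiV_vec norm_vector_x00)

theorem mainTheorem1:
  fixes f ft :: sconst
  assumes "manin_triple f ft"
    and "lie_isomorphic f bianchiIX"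
  shows "\<exists>!ft0. (ft0 = bianchiI \<or> (\<exists>b>0. ft0 = bianchiV b)) \<and>
            manin_triple bianchiIX ft0 \<and> manin_iso f ft bianchiIX ft0"
proof -
  obtain gt where iso_gt: "manin_iso f ft bianchiIX gt"
    using lie_isomorphic_imp_manin_iso[OF assms(2)] by blast
  then have "manin_triple bianchiIX gt"
    using assms(1) by (rule manin_triple_manin_iso)
  then obtain v where "gt = bianchiV_vec v"
    using manin_triple_bianchiIX_imp_bianchiV_vec by blast
  then have iso: "manin_iso f ft bianchiIX (bianchiV (norm v))"
    using manin_iso_trans[OF _ manin_iso_bianchiV_vec_bianchiV] iso_gt by simp
  show ?thesis
  proof (rule ex1I)
    show "(bianchiV (norm v) = bianchiI \<or> (\<exists>b>0. bianchiV (norm v) = bianchiV b)) \<and>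
        manin_triple bianchiIX (bianchiV (norm v)) \<and> manin_iso f ft bianchiIX (bianchiV (norm v))"
      unfolding bianchiI_or_bianchiV_pos_iff
      using iso manin_triple_manin_iso[OF iso assms(1)] norm_ge_zero by blast
  next
    fix ft0
    assume "(ft0 = bianchiI \<or> (\<exists>b>0. ft0 = bianchiV b)) \<and>
        manin_triple bianchiIX ft0 \<and> manin_iso f ft bianchiIX ft0"
    then obtain c where "c \<ge> 0" and ft0: "ft0 = bianchiV c"
      and iso_c: "manin_iso f ft bianchiIX (bianchiV c)"
      unfolding bianchiI_or_bianchiV_pos_iff by blast
    have "manin_iso bianchiIX (bianchiV c) bianchiIX (bianchiV (norm v))"
      using manin_iso_trans[OF manin_iso_sym[OF iso_c] iso] .
    then have "c = norm v"
      using \<open>c \<ge> 0\<close> norm_ge_zero by (rule manin_iso_bianchiV_imp_eq)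
    then show "ft0 = bianchiV (norm v)"
      by (simp add: ft0)
  qed
qed

end
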